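(* For $\mathcal{M}=\{k\}\subseteq\mathbb{N}_0$, $k\in\mathbb{N}_0$, the sequence $\mathcal{M}^i$ reaches its limit $\mathcal{M}^\infty=\mathcal{M}_k$ after finitely many steps; specifically $\varphi(\{0\})=\varphi(\{1\})=1$ and $\varphi(\{k\})=5$ for every $k\ge2$.
   Context: A one-heap game is a set $\mathcal{M}\subseteq\mathbb{N}_0$ of moves; from position $x$ one may move to $y\in\mathbb{N}_0$ iff $x-y\in\mathcal{M}$. Misère play: a player who cannot move wins. If $0\in\mathcal{M}$, $P(\mathcal{M})=\varnothing$. Otherwise: a position is an N-position if it has no option or some option is a P-position; otherwise it is a P-position; $P(\mathcal{M})$ is the set of P-positions. $\mathcal{M}^\star=P(\mathcal{M})$, $\mathcal{M}^0=\mathcal{M}$, $\mathcal{M}^i=(\mathcal{M}^{i-1})^\star$; $\mathcal{M}^\infty$ is the pointwise limit (set of $x$ lying in $\mathcal{M}^i$ for all sufficiently large $i$). $\varphi(\mathcal{M})=\min\{i\in\mathbb{N}_0:\ \mathcal{M}^i=\mathcal{M}^\infty\}$. $\mathcal{M}_0=\varnothing$ and for $k\ge1$, $\mathcal{M}_k=\{i(3k-1)+j:\ i\in\mathbb{N}_0,\ k\le j\le2k-1\}$. *)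

theory Defs
  imports Main
begin

text \<open>P-positions of the one-heap misere game with move set M (positions are naturals).\<close>

function isP :: "nat set \<Rightarrow> nat \<Rightarrow> bool" where
  "isP M x = (0 \<notin> M \<and> (\<exists>m\<in>M. m \<le> x) \<and>
      (\<forall>m. m \<in> M \<and> 0 < m \<and> m \<le> x \<longrightarrow> \<not> isP M (x - m)))"
  by pat_completeness auto
termination
  by (relation "measure snd") auto

declare isP.simps [simp del]

definition Ppos :: "nat set \<Rightarrow> nat set" where
  "Ppos M = {x. isP M x}"

definition Miter :: "nat set \<Rightarrow> nat \<Rightarrow> nat set" where
  "Miter M i = (Ppos ^^ i) M"

definition Minf :: "nat set \<Rightarrow> nat set" where
  "Minf M = {x. \<exists>i0. \<forall>i\<ge>i0. x \<in> Miter M i}"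

definition phi :: "nat set \<Rightarrow> nat" where
  "phi M = (LEAST i. Miter M i = Minf M)"

definition Mk :: "nat \<Rightarrow> nat set" where
  "Mk k = (if k = 0 then {} else {i * (3 * k - 1) + j | i j. k \<le> j \<and> j \<le> 2 * k - 1})"

end

theory Submission
  imports Defs
begin

text \<open>
  The P-positions of a move set M form the unique set S such that every element of S has a move,
  no two elements of S differ by a move, and every other position that has a move can move into S.
  This makes each iterate of {k} checkable by residue arithmetic. For k \<ge> 2 the first iterate is
  {x. k \<le> x mod 2k}, three further explicit sets follow, and the fifth iterate is the band
  {x. k \<le> x mod (3k - 1) < 2k}. The band is the set of P-positions of every move set lying between
  [k, 2k) and the band itself, since two band residues add up to a number in [2k, 4k - 1), which
  reduces modulo 3k - 1 below k. Explicit witnesses separate the earlier iterates from the band.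
  For k = 1 the first iterate is already the band of odd numbers; for k = 0 every later iterate
  is empty.
\<close>

lemma Ppos_eqI:
  assumes zero_not_move: "0 \<notin> M"
    and S_movable: "\<And>x. x \<in> S \<Longrightarrow> \<exists>m\<in>M. m \<le> x"
    and S_independent: "\<And>t m. t \<in> S \<Longrightarrow> m \<in> M \<Longrightarrow> t + m \<notin> S"
    and S_dominating: "\<And>x. x \<notin> S \<Longrightarrow> \<exists>m\<in>M. m \<le> x \<Longrightarrow> \<exists>t\<in>S. \<exists>m\<in>M. x = t + m"
  shows "Ppos M = S"
proof -
  have "isP M x \<longleftrightarrow> x \<in> S" for x
  proof (induction x rule: less_induct)
    case (less x)
    have options: "isP M (x - m) \<longleftrightarrow> x - m \<in> S" if "m \<in> M" "m \<le> x" for m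
    proof -
      have "0 < m" using that zero_not_move by (cases m) auto
      then show ?thesis using less.IH[of "x - m"] that by simp
    qed
    have isP_x: "isP M x \<longleftrightarrow> (\<exists>m\<in>M. m \<le> x) \<and> (\<forall>m\<in>M. m \<le> x \<longrightarrow> x - m \<notin> S)"
      using options zero_not_move by (subst isP.simps) (metis gr0I)
    show ?case
    proof
      assume "isP M x"
      then have movable: "\<exists>m\<in>M. m \<le> x" and no_P_option: "\<forall>m\<in>M. m \<le> x \<longrightarrow> x - m \<notin> S"
        using isP_x by blast+
      show "x \<in> S"
      proof (rule ccontr)
        assume "x \<notin> S"
        then obtain t m where "t \<in> S" "m \<in> M" "x = t + m"
          using S_dominating movable by blast
        then show False using no_P_option by force
      qed
    next
      assume "x \<in> S"
      moreover have "x - m \<notin> S" if "m \<in> M" "m \<le> x" for m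
        using S_independent[of "x - m" m] that \<open>x \<in> S\<close> by auto
      ultimately show "isP M x" using isP_x S_movable by blast
    qed
  qed
  then show ?thesis unfolding Ppos_def by blast
qed

lemma isP_has_move: "isP M x \<Longrightarrow> 0 \<notin> M \<and> (\<exists>m\<in>M. m \<le> x)"
  by (subst (asm) isP.simps) blast

lemma Ppos_zero_move: "0 \<in> M \<Longrightarrow> Ppos M = {}"
  unfolding Ppos_def using isP_has_move by blast

lemma Ppos_empty: "Ppos {} = {}"
  unfolding Ppos_def using isP_has_move by blast

lemma Miter_0 [simp]: "Miter M 0 = M"
  unfolding Miter_def by simp

lemma Miter_Suc [simp]: "Miter M (Suc i) = Ppos (Miter M i)"
  unfolding Miter_def by simp

lemma Miter_fixpoint:
  assumes "Miter M N = S" "Ppos S = S" "N \<le> i"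
  shows "Miter M i = S"
  using assms(3) by (induction i rule: dec_induct) (use assms(1,2) in simp_all)

lemma Minf_phi_eqI:
  assumes reached: "Miter M N = S" and fixed: "Ppos S = S"
    and not_before: "\<And>i. i < N \<Longrightarrow> Miter M i \<noteq> S"
  shows "Minf M = S" "phi M = N"
proof -
  have eventually_S: "Miter M i = S" if "N \<le> i" for i
    using Miter_fixpoint[OF reached fixed that] .
  show Minf: "Minf M = S"
  proof
    show "Minf M \<subseteq> S"
    proof
      fix x assume "x \<in> Minf M"
      then obtain i0 where "\<forall>i\<ge>i0. x \<in> Miter M i" unfolding Minf_def by blast
      then have "x \<in> Miter M (max i0 N)" by simp
      then show "x \<in> S" using eventually_S[of "max i0 N"] by simp
    qed
    show "S \<subseteq> Minf M" unfolding Minf_def using eventually_S by blast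
  qed
  show "phi M = N"
    unfolding phi_def
  proof (rule Least_equality)
    show "Miter M N = Minf M" using reached Minf by simp
    show "N \<le> i" if "Miter M i = Minf M" for i
      using not_before[of i] that Minf by (cases "i < N") auto
  qed
qed

lemma mod_bounds:
  fixes n :: nat
  assumes "0 < n"
  shows "x mod n < n" "x mod n \<le> x" "x < n \<longrightarrow> x mod n = x"
  using assms by simp_all

lemma mod_add_cases:
  fixes n :: nat
  assumes "0 < n"
  shows "(t + m) mod n = t mod n + m mod n \<or> (t + m) mod n + n = t mod n + m mod n"
proof -
  define r where "r = t mod n + m mod n"
  have sum: "(t + m) mod n = r mod n" unfolding r_def by (simp add: mod_add_eq)
  have "t mod n < n" "m mod n < n" using assms by simp_all
  then have "r < 2 * n" unfolding r_def by linarith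
  show ?thesis
  proof (cases "r < n")
    case True
    then show ?thesis using sum r_def mod_less[of r n] by linarith
  next
    case False
    then have "r mod n = r - n" using \<open>r < 2 * n\<close> le_mod_geq[of n r] by simp
    then show ?thesis using sum False r_def by linarith
  qed
qed

lemma mod_diff_cases:
  fixes n :: nat
  assumes "0 < n" "t \<le> x"
  shows "(x - t) mod n + t mod n = x mod n \<or> (x - t) mod n + t mod n = x mod n + n"
  using mod_add_cases[OF assms(1), of "x - t" t] assms by auto

lemma mod_add_quotient_eq:
  fixes n :: nat
  assumes "q * n \<le> x" "x < q * n + n"
  shows "x mod n + q * n = x"
proof -
  have "x mod n = x - q * n"
    using assms by (intro mod_nat_eqI) auto
  then show ?thesis using assms(1) by simp
qed

definition residue_band :: "nat \<Rightarrow> nat \<Rightarrow> nat set" where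
  "residue_band k n = {x. k \<le> x mod n \<and> x mod n < 2 * k}"

lemma Mk_eq_residue_band:
  assumes "1 \<le> k" "n + 1 = 3 * k"
  shows "Mk k = residue_band k n"
proof -
  have n: "3 * k - 1 = n" using assms by simp
  have "x \<in> Mk k \<longleftrightarrow> k \<le> x mod n \<and> x mod n < 2 * k" for x
  proof
    assume "x \<in> Mk k"
    then obtain i j where ij: "x = i * n + j" "k \<le> j" "j \<le> 2 * k - 1"
      using assms n unfolding Mk_def by auto
    then have "x mod n = j" using assms by simp
    then show "k \<le> x mod n \<and> x mod n < 2 * k" using ij assms by linarith
  next
    assume "k \<le> x mod n \<and> x mod n < 2 * k"
    then have "\<exists>i j. x = i * n + j \<and> k \<le> j \<and> j \<le> 2 * k - 1"
      by (intro exI[of _ "x div n"] exI[of _ "x mod n"]) (simp; linarith)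
    then show "x \<in> Mk k" using assms n by (simp add: Mk_def)
  qed
  then show ?thesis unfolding residue_band_def by blast
qed

lemma Ppos_residue_band:
  assumes k: "1 \<le> k" and n: "n + 1 = 3 * k"
    and lower: "{k..<2 * k} \<subseteq> M" and upper: "M \<subseteq> residue_band k n"
  shows "Ppos M = residue_band k n"
proof (rule Ppos_eqI)
  have n0: "0 < n" using k n by linarith
  have band_ge: "k \<le> x" if "x \<in> residue_band k n" for x
    using that unfolding residue_band_def by (auto intro: order.trans[OF _ mod_less_eq_dividend])
  show "0 \<notin> M" using upper k unfolding residue_band_def by auto
  show "\<exists>m\<in>M. m \<le> x" if "x \<in> residue_band k n" for x
    using lower k band_ge[OF that] by (intro bexI[of _ k]) auto
  show "t + m \<notin> residue_band k n" if "t \<in> residue_band k n" "m \<in> M" for t m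
    using that upper mod_add_cases[OF n0, of t m] n unfolding residue_band_def by fastforce
  show "\<exists>t\<in>residue_band k n. \<exists>m\<in>M. x = t + m"
    if x_out: "x \<notin> residue_band k n" and "\<exists>m\<in>M. m \<le> x" for x
  proof -
    have "k \<le> x" using that upper band_ge by force
    define r where "r = x mod n"
    have r: "r < n" "x < n \<longrightarrow> r = x" using mod_bounds[OF n0, of x] unfolding r_def by simp_all
    define m where "m = (if r < k then r + k else r - k)"
    have "r < k \<or> 2 * k \<le> r" using x_out unfolding r_def residue_band_def by auto
    then have m_move: "k \<le> m" "m < 2 * k" "m \<le> x"
      using r \<open>k \<le> x\<close> n unfolding m_def by (auto split: if_splits)
    have "m mod n = m" using m_move n by simp
    then have sum: "r = (x - m) mod n + m \<or> r + n = (x - m) mod n + m"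
      using mod_add_cases[OF n0, of "x - m" m] m_move unfolding r_def by simp
    have t_lt: "(x - m) mod n < n" using n0 by simp
    have "r < k \<and> m = r + k \<or> 2 * k \<le> r \<and> m = r - k"
      using \<open>r < k \<or> 2 * k \<le> r\<close> unfolding m_def by auto
    then have "k \<le> (x - m) mod n" "(x - m) mod n < 2 * k"
      using sum t_lt r n by linarith+
    then have "x - m \<in> residue_band k n" unfolding residue_band_def by simp
    moreover have "m \<in> M" using lower m_move by auto
    ultimately show ?thesis using m_move by (intro bexI[of _ "x - m"] bexI[of _ m]) auto
  qed
qed

lemma Ppos_residue_band_fixed:
  assumes "1 \<le> k" "n + 1 = 3 * k"
  shows "Ppos (residue_band k n) = residue_band k n"
  using assms by (intro Ppos_residue_band) (auto simp: residue_band_def)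

text \<open>
  The iterates of {k} for k \<ge> 2. Intervals are written additively to avoid truncated
  subtraction: \<open>4 * k \<le> x + 1 \<and> x + 2 \<le> 5 * k\<close> is x \<in> [4k - 1, 5k - 2].
\<close>

definition singleton_iter1 :: "nat \<Rightarrow> nat set" where
  "singleton_iter1 k = {x. k \<le> x mod (2 * k)}"

definition singleton_iter2 :: "nat \<Rightarrow> nat set" where
  "singleton_iter2 k = {x. k \<le> x \<and> x < 2 * k \<or> x mod (2 * k) + 1 = 2 * k}"

definition singleton_iter3 :: "nat \<Rightarrow> nat set" where
  "singleton_iter3 k = {x. k \<le> x \<and> x < 2 * k \<or> 4 * k \<le> x + 1 \<and> x + 2 \<le> 5 * k
     \<or> 5 * k \<le> x + 2 \<and> x mod (2 * k) + 2 = k}"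

definition singleton_iter4 :: "nat \<Rightarrow> nat set" where
  "singleton_iter4 k = {x. k \<le> x \<and> x < 2 * k \<or> 4 * k \<le> x + 1 \<and> x + 2 \<le> 5 * k
     \<or> 7 * k \<le> x + 2 \<and> x + 3 \<le> 8 * k \<or> x + 3 = 10 * k}"

lemma singleton_iter1_ge: "x \<in> singleton_iter1 k \<Longrightarrow> k \<le> x"
  unfolding singleton_iter1_def by (auto intro: order.trans[OF _ mod_less_eq_dividend])

lemma singleton_iter2_ge: "2 \<le> k \<Longrightarrow> x \<in> singleton_iter2 k \<Longrightarrow> k \<le> x"
  unfolding singleton_iter2_def mem_Collect_eq using mod_less_eq_dividend[of x "2 * k"] by linarith

lemma singleton_iter3_ge: "2 \<le> k \<Longrightarrow> x \<in> singleton_iter3 k \<Longrightarrow> k \<le> x"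
  unfolding singleton_iter3_def mem_Collect_eq by linarith

lemma singleton_iter4_ge: "2 \<le> k \<Longrightarrow> x \<in> singleton_iter4 k \<Longrightarrow> k \<le> x"
  unfolding singleton_iter4_def mem_Collect_eq by linarith

lemma Ppos_singleton:
  assumes "1 \<le> k"
  shows "Ppos {k} = singleton_iter1 k"
  unfolding singleton_iter1_def
proof (rule Ppos_eqI)
  have n0: "0 < 2 * k" using assms by simp
  show "0 \<notin> {k}" using assms by simp
  show "\<exists>m\<in>{k}. m \<le> x" if "x \<in> {x. k \<le> x mod (2 * k)}" for x
    using that by (auto intro: order.trans[OF _ mod_less_eq_dividend])
  show "t + m \<notin> {x. k \<le> x mod (2 * k)}" if "t \<in> {x. k \<le> x mod (2 * k)}" "m \<in> {k}" for t m
  proof -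
    have t: "k \<le> t mod (2 * k)" "t mod (2 * k) < 2 * k" and m: "m = k" using that n0 by auto
    have "k mod (2 * k) = k" "(t + k) mod (2 * k) < 2 * k" using assms by simp_all
    then have "\<not> k \<le> (t + k) mod (2 * k)" using mod_add_cases[OF n0, of t k] t by linarith
    then show ?thesis using m by simp
  qed
  show "\<exists>t\<in>{x. k \<le> x mod (2 * k)}. \<exists>m\<in>{k}. x = t + m"
    if "x \<notin> {x. k \<le> x mod (2 * k)}" and "\<exists>m\<in>{k}. m \<le> x" for x
  proof -
    have "k \<le> (x - k) mod (2 * k)"
      using that mod_add_cases[OF n0, of "x - k" k] mod_bounds[OF n0, of x] by auto
    then show ?thesis using that by auto
  qed
qed

lemma Ppos_singleton_iter1:
  assumes k: "2 \<le> k"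
  shows "Ppos (singleton_iter1 k) = singleton_iter2 k"
proof (rule Ppos_eqI)
  have n0: "0 < 2 * k" using k by simp
  show "0 \<notin> singleton_iter1 k" using k unfolding singleton_iter1_def by simp
  show "\<exists>m\<in>singleton_iter1 k. m \<le> x" if "x \<in> singleton_iter2 k" for x
    using singleton_iter2_ge[OF k that] k unfolding singleton_iter1_def by (intro bexI[of _ k]) auto
  show "t + m \<notin> singleton_iter2 k" if "t \<in> singleton_iter2 k" "m \<in> singleton_iter1 k" for t m
  proof
    assume "t + m \<in> singleton_iter2 k"
    then show False
      using that singleton_iter1_ge[OF that(2)] mod_add_cases[OF n0, of t m]
        mod_bounds[OF n0, of t] mod_bounds[OF n0, of m] mod_bounds[OF n0, of "t + m"]
      unfolding singleton_iter1_def singleton_iter2_def mem_Collect_eq by linarith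
  qed
  show "\<exists>t\<in>singleton_iter2 k. \<exists>m\<in>singleton_iter1 k. x = t + m"
    if x_out: "x \<notin> singleton_iter2 k" and "\<exists>m\<in>singleton_iter1 k. m \<le> x" for x
  proof -
    have "k \<le> x" using that singleton_iter1_ge by force
    define r where "r = x mod (2 * k)"
    have r: "r < k \<or> k \<le> r \<and> r + 2 \<le> 2 * k" "2 * k \<le> x"
      using x_out \<open>k \<le> x\<close> mod_bounds[OF n0, of x] unfolding r_def singleton_iter2_def by auto
    define t where "t = (if r < k then k else 2 * k - 1)"
    have t: "t \<in> singleton_iter2 k" "t \<le> x" "t mod (2 * k) = t"
      using k r unfolding t_def singleton_iter2_def by auto
    have "r < k \<and> t = k \<or> k \<le> r \<and> t + 1 = 2 * k" using r k unfolding t_def by auto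
    then have "k \<le> (x - t) mod (2 * k)"
      using mod_diff_cases[OF n0 t(2)] t(3) r mod_bounds[OF n0, of "x - t"] unfolding r_def
      by linarith
    then have "x - t \<in> singleton_iter1 k" unfolding singleton_iter1_def by simp
    then show ?thesis using t by (intro bexI[of _ t] bexI[of _ "x - t"]) auto
  qed
qed

lemma singleton_iter3_independent:
  assumes k: "2 \<le> k" and t: "t \<in> singleton_iter3 k" and m: "m \<in> singleton_iter2 k"
  shows "t + m \<notin> singleton_iter3 k"
proof
  define x where "x = t + m"
  assume "t + m \<in> singleton_iter3 k"
  then have x: "k \<le> x \<and> x < 2 * k \<or> 4 * k \<le> x + 1 \<and> x + 2 \<le> 5 * k
      \<or> 5 * k \<le> x + 2 \<and> x mod (2 * k) + 2 = k"
    unfolding x_def singleton_iter3_def by simp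
  have n0: "0 < 2 * k" using k by simp
  have t': "k \<le> t \<and> t < 2 * k \<or> 4 * k \<le> t + 1 \<and> t + 2 \<le> 5 * k
      \<or> 5 * k \<le> t + 2 \<and> t mod (2 * k) + 2 = k"
    using t unfolding singleton_iter3_def by simp
  have m': "k \<le> m \<and> m < 2 * k \<or> m mod (2 * k) + 1 = 2 * k"
    using m unfolding singleton_iter2_def by simp
  have "k \<le> m" "k \<le> t" using singleton_iter2_ge[OF k m] singleton_iter3_ge[OF k t] by simp_all
  note sum = mod_add_cases[OF n0, of t m, folded x_def]
  note bounds = mod_bounds[OF n0, of x] mod_bounds[OF n0, of t] mod_bounds[OF n0, of m]
  show False
  proof (cases "x + 2 \<le> 5 * k")
    case True
    then have "t < 2 * k" "4 * k \<le> x + 1" using x t' \<open>k \<le> m\<close> \<open>k \<le> t\<close> unfolding x_def by linarith+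
    moreover have "2 * k \<le> m \<and> m < 2 * k + 2 * k \<longrightarrow> m mod (2 * k) + 1 * (2 * k) = m"
      using mod_add_quotient_eq[of 1 "2 * k" m] by simp
    ultimately show False using True m' \<open>k \<le> t\<close> unfolding x_def by linarith
  next
    case False
    then have rx: "x mod (2 * k) + 2 = k" using x by linarith
    have "4 * k \<le> x \<and> x < 6 * k \<longrightarrow> x mod (2 * k) + 2 * (2 * k) = x"
      "6 * k \<le> x \<and> x < 8 * k \<longrightarrow> x mod (2 * k) + 3 * (2 * k) = x"
      using mod_add_quotient_eq[of 2 "2 * k" x] mod_add_quotient_eq[of 3 "2 * k" x] by simp_all
    then have x_ge: "7 * k \<le> x + 2" using rx False k by linarith
    show False
    proof (cases "m < 2 * k")
      case True
      then have "t mod (2 * k) + 2 = k" using t' x_ge k unfolding x_def by linarith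
      then show False using sum rx bounds True \<open>k \<le> m\<close> k by linarith
    next
      case False
      then have "t mod (2 * k) + 1 = k" using m' sum rx bounds k by linarith
      moreover have "2 * k \<le> t \<and> t < 4 * k \<longrightarrow> t mod (2 * k) + 1 * (2 * k) = t"
        "4 * k \<le> t \<and> t < 6 * k \<longrightarrow> t mod (2 * k) + 2 * (2 * k) = t"
        using mod_add_quotient_eq[of 1 "2 * k" t] mod_add_quotient_eq[of 2 "2 * k" t] by simp_all
      ultimately show False using t' bounds k by linarith
    qed
  qed
qed

lemma singleton_iter3_dominating_large:
  assumes k: "2 \<le> k" and x: "5 * k \<le> x + 1" "x mod (2 * k) + 2 \<noteq> k"
  obtains t where "t \<in> singleton_iter3 k" "t \<le> x" "x - t \<in> singleton_iter2 k"
proof -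
  have n0: "0 < 2 * k" using k by simp
  define r where "r = x mod (2 * k)"
  have r: "r < 2 * k" "r \<le> x" "r + 2 \<noteq> k" using x mod_bounds[OF n0, of x] unfolding r_def by auto
  show ?thesis
  proof (cases "r + 3 \<le> k \<or> 2 * k \<le> r + 2")
    case True
    define m where "m = (if r + 3 \<le> k then r + k + 2 else r + 2 - k)"
    have m_cases: "r + 3 \<le> k \<and> m = r + k + 2 \<or> 2 * k \<le> r + 2 \<and> m = r + 2 - k"
      using True unfolding m_def by auto
    then have m: "k \<le> m" "m < 2 * k" "m \<le> x" using r x k by linarith+
    then have "m mod (2 * k) = m" by simp
    then have rt: "(x - m) mod (2 * k) + 2 = k"
      using mod_diff_cases[OF n0 m(3)] m_cases r k mod_bounds[OF n0, of "x - m"] unfolding r_def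
      by linarith
    have "2 * k \<le> x - m \<and> x - m < 4 * k \<longrightarrow> (x - m) mod (2 * k) + 1 * (2 * k) = x - m"
      "4 * k \<le> x - m \<and> x - m < 6 * k \<longrightarrow> (x - m) mod (2 * k) + 2 * (2 * k) = x - m"
      using mod_add_quotient_eq[of 1 "2 * k" "x - m"] mod_add_quotient_eq[of 2 "2 * k" "x - m"]
      by simp_all
    then have "5 * k \<le> x - m + 2" using rt m x by linarith
    then have "x - m \<in> singleton_iter3 k" using rt unfolding singleton_iter3_def by simp
    moreover have "x - (x - m) \<in> singleton_iter2 k" using m unfolding singleton_iter2_def by simp
    ultimately show ?thesis using that[of "x - m"] by simp
  next
    case False
    then have t: "k \<le> r + 1" "r + 1 < 2 * k" "r + 1 \<le> x" using r x by auto
    moreover have "(r + 1) mod (2 * k) = r + 1" using t by simp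
    ultimately have "(x - (r + 1)) mod (2 * k) + 1 = 2 * k"
      using mod_diff_cases[OF n0 t(3)] mod_bounds[OF n0, of "x - (r + 1)"] unfolding r_def
      by linarith
    then show ?thesis using that[of "r + 1"] t
      unfolding singleton_iter2_def singleton_iter3_def by auto
  qed
qed

lemma singleton_iter3_dominating:
  assumes k: "2 \<le> k" and x_out: "x \<notin> singleton_iter3 k" and "k \<le> x"
  obtains t where "t \<in> singleton_iter3 k" "t \<le> x" "x - t \<in> singleton_iter2 k"
proof -
  have x_out': "\<not> (k \<le> x \<and> x < 2 * k \<or> 4 * k \<le> x + 1 \<and> x + 2 \<le> 5 * k
      \<or> 5 * k \<le> x + 2 \<and> x mod (2 * k) + 2 = k)"
    using x_out unfolding singleton_iter3_def by simp
  consider "x < 3 * k" | "3 * k \<le> x" "x + 1 < 4 * k" | "5 * k \<le> x + 1" "x mod (2 * k) + 2 \<noteq> k"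
    using x_out' \<open>k \<le> x\<close> by linarith
  then show ?thesis
  proof cases
    case 1
    moreover have "2 * k \<le> x" using x_out' \<open>k \<le> x\<close> by linarith
    ultimately have "x - k \<in> singleton_iter3 k" unfolding singleton_iter3_def by (simp; linarith)
    moreover have "x - (x - k) \<in> singleton_iter2 k"
      using \<open>k \<le> x\<close> k unfolding singleton_iter2_def by simp
    ultimately show ?thesis using that by simp
  next
    case 2
    have "2 * k - 1 \<in> singleton_iter3 k" using k unfolding singleton_iter3_def by simp
    moreover have "x - (2 * k - 1) \<in> singleton_iter2 k"
      using 2 unfolding singleton_iter2_def mem_Collect_eq by linarith
    moreover have "2 * k - 1 \<le> x" using 2 by linarith
    ultimately show ?thesis using that by blast
  next
    case 3
    from singleton_iter3_dominating_large[OF k this] show ?thesis using that .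
  qed
qed

lemma Ppos_singleton_iter2:
  assumes k: "2 \<le> k"
  shows "Ppos (singleton_iter2 k) = singleton_iter3 k"
proof (rule Ppos_eqI)
  show "0 \<notin> singleton_iter2 k" using singleton_iter2_ge[OF k] k by force
  show "\<exists>m\<in>singleton_iter2 k. m \<le> x" if "x \<in> singleton_iter3 k" for x
    using singleton_iter3_ge[OF k that] k unfolding singleton_iter2_def by (intro bexI[of _ k]) auto
  show "t + m \<notin> singleton_iter3 k" if "t \<in> singleton_iter3 k" "m \<in> singleton_iter2 k" for t m
    using singleton_iter3_independent[OF k that] .
  show "\<exists>t\<in>singleton_iter3 k. \<exists>m\<in>singleton_iter2 k. x = t + m"
    if x_out: "x \<notin> singleton_iter3 k" and "\<exists>m\<in>singleton_iter2 k. m \<le> x" for x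
  proof -
    have "k \<le> x" using that singleton_iter2_ge[OF k] by force
    then obtain t where "t \<in> singleton_iter3 k" "t \<le> x" "x - t \<in> singleton_iter2 k"
      using singleton_iter3_dominating[OF k x_out] by blast
    then show ?thesis by (intro bexI[of _ t] bexI[of _ "x - t"]) auto
  qed
qed

lemma singleton_iter3_below_10k:
  assumes k: "2 \<le> k" and m: "m \<in> singleton_iter3 k" and "m + 3 \<le> 10 * k"
  shows "k \<le> m \<and> m < 2 * k \<or> 4 * k \<le> m + 1 \<and> m + 2 \<le> 5 * k \<or> m + 2 = 7 * k \<or> m + 2 = 9 * k"
proof -
  have "q * (2 * k) \<le> m \<and> m < q * (2 * k) + 2 * k \<longrightarrow> m mod (2 * k) + q * (2 * k) = m" for q
    using mod_add_quotient_eq[of q "2 * k" m] by blast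
  from this[of 2] this[of 3] this[of 4] show ?thesis
    using m assms(3) k unfolding singleton_iter3_def mem_Collect_eq by linarith
qed

lemma singleton_iter4_independent:
  assumes k: "2 \<le> k" and t: "t \<in> singleton_iter4 k" and m: "m \<in> singleton_iter3 k"
  shows "t + m \<notin> singleton_iter4 k"
proof
  assume x: "t + m \<in> singleton_iter4 k"
  then have "m + 3 \<le> 10 * k" using singleton_iter4_ge[OF k t]
    unfolding singleton_iter4_def mem_Collect_eq by linarith
  then show False
    using singleton_iter3_below_10k[OF k m] x t k unfolding singleton_iter4_def mem_Collect_eq
    by linarith
qed

lemma singleton_iter4_dominating_small:
  assumes k: "2 \<le> k" and x_out: "x \<notin> singleton_iter4 k" and x: "k \<le> x" "x + 3 < 12 * k"
  obtains t where "t \<in> singleton_iter4 k" "t \<le> x" "x - t \<in> singleton_iter3 k"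
proof -
  have x_out': "\<not> (k \<le> x \<and> x < 2 * k \<or> 4 * k \<le> x + 1 \<and> x + 2 \<le> 5 * k
      \<or> 7 * k \<le> x + 2 \<and> x + 3 \<le> 8 * k \<or> x + 3 = 10 * k)"
    using x_out unfolding singleton_iter4_def by simp
  have "(9 * k - 2) mod (2 * k) + 4 * (2 * k) = 9 * k - 2"
    using k by (intro mod_add_quotient_eq) auto
  then have far_move: "9 * k - 2 \<in> singleton_iter3 k" using k unfolding singleton_iter3_def by simp
  note witness = that
  have split: thesis
    if "t \<le> x"
      and "k \<le> t \<and> t < 2 * k \<or> 4 * k \<le> t + 1 \<and> t + 2 \<le> 5 * k
        \<or> 7 * k \<le> t + 2 \<and> t + 3 \<le> 8 * k \<or> t + 3 = 10 * k"
      and "k \<le> x - t \<and> x - t < 2 * k \<or> 4 * k \<le> x - t + 1 \<and> x - t + 2 \<le> 5 * k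
        \<or> x - t = 9 * k - 2" for t
  proof (rule witness[of t])
    show "t \<in> singleton_iter4 k" using that(2) unfolding singleton_iter4_def by simp
    show "x - t \<in> singleton_iter3 k" using that(3) far_move unfolding singleton_iter3_def by auto
  qed (use that(1) in simp)
  consider "x < 3 * k" | "3 * k \<le> x" "x + 1 < 4 * k" | "5 * k \<le> x + 1" "x + 1 < 6 * k"
    | "6 * k \<le> x + 1" "x + 2 < 7 * k" | "8 * k \<le> x + 2" "x + 2 < 9 * k"
    | "9 * k \<le> x + 2" "x + 3 < 10 * k" | "10 * k \<le> x + 2" "x + 3 < 11 * k"
    | "11 * k \<le> x + 3" "x + 3 < 12 * k"
    using x_out' x by linarith
  then show ?thesis
  proof cases
    case 1
    show ?thesis by (rule split[of "x - k"]) (use 1 x_out' x in linarith)+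
  next
    case 2
    show ?thesis by (rule split[of "2 * k - 1"]) (use 2 k in linarith)+
  next
    case 3
    show ?thesis by (rule split[of "x - (4 * k - 1)"]) (use 3 k in linarith)+
  next
    case 4
    show ?thesis by (rule split[of "2 * k - 1"]) (use 4 k in linarith)+
  next
    case 5
    show ?thesis by (rule split[of "x - k"]) (use 5 k in linarith)+
  next
    case 6
    show ?thesis by (rule split[of "8 * k - 3"]) (use 6 k in linarith)+
  next
    case 7
    show ?thesis by (rule split[of "x - (9 * k - 2)"]) (use 7 k in linarith)+
  next
    case 8
    show ?thesis by (rule split[of "10 * k - 3"]) (use 8 k in linarith)+
  qed
qed

lemma singleton_iter4_dominating_large:
  assumes k: "2 \<le> k" and x: "12 * k \<le> x + 3"
  obtains t where "t \<in> singleton_iter4 k" "t \<le> x" "x - t \<in> singleton_iter3 k"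
proof -
  have n0: "0 < 2 * k" using k by simp
  define r where "r = x mod (2 * k)"
  have r: "r < 2 * k" using n0 unfolding r_def by simp
  note witness = that
  \<comment> \<open>Choosing t \<equiv> x + 2 - k (mod 2k) puts x - t into the periodic part of the third iterate.\<close>
  have split: thesis
    if "k \<le> t \<and> t < 2 * k \<or> 4 * k \<le> t + 1 \<and> t + 2 \<le> 5 * k \<or> t + 1 = 7 * k"
      and "t mod (2 * k) + k = r + 2 \<or> t mod (2 * k) + k = r + 2 + 2 * k" for t
  proof (rule witness[of t])
    show "t \<in> singleton_iter4 k" using that(1) k unfolding singleton_iter4_def mem_Collect_eq
      by linarith
    show t_le: "t \<le> x" using that(1) x by linarith
    have "(x - t) mod (2 * k) + 2 = k"
      using mod_diff_cases[OF n0 t_le] that(2) mod_bounds[OF n0, of "x - t"]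
        mod_bounds[OF n0, of t] r k
      unfolding r_def by linarith
    moreover have "5 * k \<le> x - t + 2" using that(1) x by linarith
    ultimately show "x - t \<in> singleton_iter3 k" unfolding singleton_iter3_def by simp
  qed
  consider "r + 3 \<le> k" | "k \<le> r + 2" "r + 4 \<le> 2 * k" | "r + 3 = 2 * k" | "2 * k \<le> r + 2"
    by linarith
  then show ?thesis
  proof cases
    case 1
    then have residue: "(r + k + 2) mod (2 * k) = r + k + 2" by simp
    show ?thesis by (rule split[of "r + k + 2"]) (use 1 residue in linarith)+
  next
    case 2
    have residue: "(r + 3 * k + 2) mod (2 * k) + 2 * (2 * k) = r + 3 * k + 2"
      using 2 by (intro mod_add_quotient_eq) auto
    show ?thesis by (rule split[of "r + 3 * k + 2"]) (use 2 residue in linarith)+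
  next
    case 3
    have residue: "(7 * k - 1) mod (2 * k) + 3 * (2 * k) = 7 * k - 1"
      using k by (intro mod_add_quotient_eq) auto
    show ?thesis by (rule split[of "7 * k - 1"]) (use 3 k residue in linarith)+
  next
    case 4
    then have residue: "(r + 2 - k) mod (2 * k) = r + 2 - k" using r k by simp
    show ?thesis by (rule split[of "r + 2 - k"]) (use 4 r k residue in linarith)+
  qed
qed

lemma Ppos_singleton_iter3:
  assumes k: "2 \<le> k"
  shows "Ppos (singleton_iter3 k) = singleton_iter4 k"
proof (rule Ppos_eqI)
  show "0 \<notin> singleton_iter3 k" using singleton_iter3_ge[OF k] k by force
  show "\<exists>m\<in>singleton_iter3 k. m \<le> x" if "x \<in> singleton_iter4 k" for x
    using singleton_iter4_ge[OF k that] k unfolding singleton_iter3_def by (intro bexI[of _ k]) auto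
  show "t + m \<notin> singleton_iter4 k" if "t \<in> singleton_iter4 k" "m \<in> singleton_iter3 k" for t m
    using singleton_iter4_independent[OF k that] .
  show "\<exists>t\<in>singleton_iter4 k. \<exists>m\<in>singleton_iter3 k. x = t + m"
    if x_out: "x \<notin> singleton_iter4 k" and "\<exists>m\<in>singleton_iter3 k. m \<le> x" for x
  proof -
    have "k \<le> x" using that singleton_iter3_ge[OF k] by force
    then obtain t where "t \<in> singleton_iter4 k" "t \<le> x" "x - t \<in> singleton_iter3 k"
      using singleton_iter4_dominating_small[OF k x_out] singleton_iter4_dominating_large[OF k]
      by (metis not_less)
    then show ?thesis by (intro bexI[of _ t] bexI[of _ "x - t"]) auto
  qed
qed

lemma singleton_iter4_subset_residue_band:
  assumes k: "2 \<le> k" and n: "n + 1 = 3 * k"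
  shows "singleton_iter4 k \<subseteq> residue_band k n"
proof
  fix x assume "x \<in> singleton_iter4 k"
  then have x: "k \<le> x \<and> x < 2 * k \<or> 4 * k \<le> x + 1 \<and> x + 2 \<le> 5 * k
      \<or> 7 * k \<le> x + 2 \<and> x + 3 \<le> 8 * k \<or> x + 3 = 10 * k"
    unfolding singleton_iter4_def by simp
  have "q * n \<le> x \<and> x < q * n + n \<longrightarrow> x mod n + q * n = x" for q
    using mod_add_quotient_eq[of q n x] by blast
  from this[of 0] this[of 1] this[of 2] this[of 3] have "k \<le> x mod n \<and> x mod n < 2 * k"
    using x n k by linarith
  then show "x \<in> residue_band k n" unfolding residue_band_def by simp
qed

lemma Ppos_singleton_iter4:
  assumes k: "2 \<le> k" and n: "n + 1 = 3 * k"
  shows "Ppos (singleton_iter4 k) = residue_band k n"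
  using k n singleton_iter4_subset_residue_band[OF k n]
  by (intro Ppos_residue_band) (auto simp: singleton_iter4_def)

lemma singleton_iters_ne_residue_band:
  assumes k: "2 \<le> k" and n: "n + 1 = 3 * k"
  shows "{k} \<noteq> residue_band k n" "singleton_iter1 k \<noteq> residue_band k n"
    "singleton_iter2 k \<noteq> residue_band k n" "singleton_iter3 k \<noteq> residue_band k n"
    "singleton_iter4 k \<noteq> residue_band k n"
proof -
  have residues: "(k + 1) mod n + 0 * n = k + 1" "(3 * k) mod (2 * k) + 1 * (2 * k) = 3 * k"
    "(3 * k) mod n + 1 * n = 3 * k" "(4 * k) mod (2 * k) + 2 * (2 * k) = 4 * k"
    "(4 * k) mod n + 1 * n = 4 * k" "(7 * k - 1) mod (2 * k) + 3 * (2 * k) = 7 * k - 1"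
    "(7 * k - 1) mod n + 2 * n = 7 * k - 1" "(10 * k - 2) mod n + 3 * n = 10 * k - 2"
    using k n by (intro mod_add_quotient_eq; linarith)+
  note defs = residue_band_def singleton_iter1_def singleton_iter2_def singleton_iter3_def
    singleton_iter4_def mem_Collect_eq
  have "k + 1 \<in> residue_band k n" using residues(1) k unfolding defs by linarith
  then show "{k} \<noteq> residue_band k n" by (metis Suc_eq_plus1 n_not_Suc_n singletonD)
  have "3 * k \<in> singleton_iter1 k" "3 * k \<notin> residue_band k n"
    using residues(2,3) n k unfolding defs by linarith+
  then show "singleton_iter1 k \<noteq> residue_band k n" by blast
  have "4 * k \<notin> singleton_iter2 k" "4 * k \<in> residue_band k n"
    using residues(4,5) n k unfolding defs by linarith+
  then show "singleton_iter2 k \<noteq> residue_band k n" by blast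
  have "7 * k - 1 \<notin> singleton_iter3 k" "7 * k - 1 \<in> residue_band k n"
    using residues(6,7) n k unfolding defs by linarith+
  then show "singleton_iter3 k \<noteq> residue_band k n" by blast
  have "10 * k - 2 \<notin> singleton_iter4 k" "10 * k - 2 \<in> residue_band k n"
    using residues(8) n k unfolding defs by linarith+
  then show "singleton_iter4 k \<noteq> residue_band k n" by blast
qed

lemma singleton_0_limit: "Miter {0} 1 = Mk 0" "Minf {0} = Mk 0" "phi {0} = 1"
proof -
  show reached: "Miter {0} 1 = Mk 0" by (simp add: Ppos_zero_move Mk_def)
  have "Ppos (Mk 0) = Mk 0" by (simp add: Ppos_empty Mk_def)
  from Minf_phi_eqI[OF reached this] show "Minf {0} = Mk 0" "phi {0} = 1"
    by (auto simp: Mk_def)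
qed

lemma singleton_1_limit: "Miter {1} 1 = Mk 1" "Minf {1} = Mk 1" "phi {1} = 1"
proof -
  have band: "Mk 1 = residue_band 1 2" by (rule Mk_eq_residue_band) simp_all
  have "Ppos {1} = residue_band 1 2"
    using Ppos_singleton[of 1] by (simp add: singleton_iter1_def residue_band_def)
  then show reached: "Miter {1} 1 = Mk 1" using band by simp
  have "3 \<in> Mk 1" "3 \<notin> Miter {1} 0" unfolding band residue_band_def by simp_all
  then have not_before: "Miter {1} i \<noteq> Mk 1" if "i < 1" for i using that by (metis less_one)
  have fixed: "Ppos (Mk 1) = Mk 1" using Ppos_residue_band_fixed[of 1 2] band by simp
  show "Minf {1} = Mk 1" "phi {1} = 1" using Minf_phi_eqI[OF reached fixed] not_before by blast+
qed

lemma singleton_limit: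
  assumes k: "2 \<le> k"
  shows "Miter {k} 5 = Mk k" "Minf {k} = Mk k" "phi {k} = 5"
proof -
  define n where "n = 3 * k - 1"
  have n: "n + 1 = 3 * k" using k unfolding n_def by simp
  have band: "Mk k = residue_band k n" using Mk_eq_residue_band k n by simp
  have iter: "Miter {k} 1 = singleton_iter1 k" "Miter {k} 2 = singleton_iter2 k"
    "Miter {k} 3 = singleton_iter3 k" "Miter {k} 4 = singleton_iter4 k"
    "Miter {k} 5 = residue_band k n"
    using k Ppos_singleton[of k] Ppos_singleton_iter1 Ppos_singleton_iter2 Ppos_singleton_iter3
      Ppos_singleton_iter4[OF k n]
    by (simp_all add: numeral_eq_Suc)
  then show reached: "Miter {k} 5 = Mk k" using band by simp
  have not_before: "Miter {k} i \<noteq> Mk k" if "i < 5" for i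
  proof -
    have "i = 0 \<or> i = 1 \<or> i = 2 \<or> i = 3 \<or> i = 4" using that by linarith
    then show ?thesis
      using iter Miter_0[of "{k}"] singleton_iters_ne_residue_band[OF k n] unfolding band
      by (elim disjE) simp_all
  qed
  have fixed: "Ppos (Mk k) = Mk k" using Ppos_residue_band_fixed[OF _ n] k band by simp
  show "Minf {k} = Mk k" "phi {k} = 5" using Minf_phi_eqI[OF reached fixed] not_before by blast+
qed

theorem corollary10:
  shows "(\<forall>k::nat. Minf {k} = Mk k \<and> (\<exists>i. Miter {k} i = Minf {k}))
     \<and> phi {0} = 1 \<and> phi {1} = 1 \<and> (\<forall>k::nat. k \<ge> 2 \<longrightarrow> phi {k} = 5)"
proof -
  have "Minf {k} = Mk k \<and> (\<exists>i. Miter {k} i = Minf {k})" for k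
  proof -
    consider "k = 0" | "k = 1" | "2 \<le> k" by linarith
    then show ?thesis
    proof cases
      case 1
      then show ?thesis using singleton_0_limit(1,2) by (intro conjI exI[of _ 1]) simp_all
    next
      case 2
      then show ?thesis using singleton_1_limit(1,2) by (intro conjI exI[of _ 1]) simp_all
    next
      case 3
      then show ?thesis using singleton_limit(1,2) by (intro conjI exI[of _ 5]) simp_all
    qed
  qed
  then show ?thesis using singleton_0_limit(3) singleton_1_limit(3) singleton_limit(3) by blast
qed

end
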